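(* Let $X,Y$ be Banach spaces, let $F:X\rightrightarrows Y$ be a closed convex set-valued mapping, let $A\subset X$ be a closed convex set, let $\bar y\in Y$, and put $S:=F^{-1}(\bar y)\cap A$. Let $\bar x\in S$. Then $$\frac{1}{{\rm subreg}_AF(\bar x,\bar y)}=\eta_A(F,\bar x,\bar y)=\frac{1}{\tau_A(F,\bar x,\bar y)},$$ where these three quantities are defined below.
   Context: $B_X,B_Y$ denote the closed unit balls of $X,Y$; $B(x,\delta)$ is the open ball of center $x$ and radius $\delta$. $F$ closed convex means its graph ${\rm gph}(F)=\{(x,y):y\in F(x)\}$ is a closed convex subset of $X\times Y$. For a closed convex set $C$ and $a\in C$, the contingent cone $T(C,a)$ is the set of $v$ for which there exist $v_n\to v$ and $t_n\to0^+$ with $a+t_nv_n\in C$ for all $n$. For $(x,y)\in{\rm gph}(F)$ the graphical derivative is $DF(x,y)(u):=\{v\in Y:(u,v)\in T({\rm gph}(F),(x,y))\}$, and $DF^{-1}(y,x)(v):=\{u\in X:(u,v)\in T({\rm gph}(F),(x,y))\}$; for a set $W\subset Y$, $DF^{-1}(y,x)(W)=\bigcup_{v\in W}DF^{-1}(y,x)(v)$. Distances to the empty set are $+\infty$; $1/0=+\infty$, $1/(+\infty)=0$. Definitions: ${\rm subreg}_AF(\bar x,\bar y):=\inf\{\tau>0:\exists\delta>0$ such that $d(x,S)\le\tau(d(\bar y,F(x))+d(x,A))$ for all $x\in B(\bar x,\delta)\}$ (infimum of the empty set is $+\infty$). For $x\in S$ and $\eta>0$, condition (P) is: $DF^{-1}(\bar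 y,x)(\eta_1B_Y)\cap(T(A,x)+\eta_2B_X)\subset T(S,x)+B_X$ for all $\eta_1,\eta_2\ge0$ with $\eta_1+\eta_2<\eta$. For $x\in S$ and $\tau>0$, condition (Q) is: $d(h,T(S,x))\le\tau\big(d(0,DF(x,\bar y)(h))+d(h,T(A,x))\big)$ for all $h\in X$. $\eta_A(F,\bar x,\bar y):=\sup\{\eta>0:\exists\delta>0$ such that (P) holds for every $x\in S\cap B(\bar x,\delta)\}$ (supremum of the empty set is $0$). $\tau_A(F,\bar x,\bar y):=\inf\{\tau>0:\exists\delta>0$ such that (Q) holds for every $x\in S\cap B(\bar x,\delta)\}$ (infimum of the empty set is $+\infty$). *)

theory Defs
  imports "HOL-Analysis.Analysis" "HOL-Library.Extended_Real"
begin

definition edist_set :: "'a::real_normed_vector \<Rightarrow> 'a set \<Rightarrow> ereal" where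
  "edist_set x C = (if C = {} then \<infinity> else ereal (infdist x C))"

definition gph :: "('a \<Rightarrow> 'b set) \<Rightarrow> ('a \<times> 'b) set" where
  "gph F = {(x, y). y \<in> F x}"

definition contingent_cone :: "'a::real_normed_vector set \<Rightarrow> 'a \<Rightarrow> 'a set" where
  "contingent_cone C a = {v. \<exists>vs ts. (vs \<longlonglongrightarrow> v) \<and> (ts \<longlonglongrightarrow> 0) \<and> (\<forall>n. ts n > (0::real))
      \<and> (\<forall>n. a + ts n *\<^sub>R vs n \<in> C)}"

definition graph_deriv ::
  "('a::real_normed_vector \<Rightarrow> 'b::real_normed_vector set) \<Rightarrow> 'a \<Rightarrow> 'b \<Rightarrow> 'a \<Rightarrow> 'b set" where
  "graph_deriv F x y u = {v. (u, v) \<in> contingent_cone (gph F) (x, y)}"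

definition graph_deriv_inv_set ::
  "('a::real_normed_vector \<Rightarrow> 'b::real_normed_vector set) \<Rightarrow> 'b \<Rightarrow> 'a \<Rightarrow> 'b set \<Rightarrow> 'a set" where
  "graph_deriv_inv_set F y x W = (\<Union>v\<in>W. {u. (u, v) \<in> contingent_cone (gph F) (x, y)})"

definition set_plus :: "'a::real_normed_vector set \<Rightarrow> 'a set \<Rightarrow> 'a set" where
  "set_plus P Q = {p + q | p q. p \<in> P \<and> q \<in> Q}"

definition set_scale :: "real \<Rightarrow> 'a::real_normed_vector set \<Rightarrow> 'a set" where
  "set_scale t P = (\<lambda>p. t *\<^sub>R p) ` P"

definition solset :: "('a \<Rightarrow> 'b set) \<Rightarrow> 'a set \<Rightarrow> 'b \<Rightarrow> 'a set" where
  "solset F A yb = {x. yb \<in> F x} \<inter> A"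

definition subreg ::
  "('a::real_normed_vector \<Rightarrow> 'b::real_normed_vector set) \<Rightarrow> 'a set \<Rightarrow> 'a \<Rightarrow> 'b \<Rightarrow> ereal" where
  "subreg F A xb yb = Inf (ereal ` {\<tau>. \<tau> > 0 \<and> (\<exists>\<delta>>0. \<forall>x\<in>ball xb \<delta>.
      edist_set x (solset F A yb) \<le> ereal \<tau> * (edist_set yb (F x) + edist_set x A))})"

definition condP ::
  "('a::real_normed_vector \<Rightarrow> 'b::real_normed_vector set) \<Rightarrow> 'a set \<Rightarrow> 'b \<Rightarrow> 'a \<Rightarrow> real \<Rightarrow> bool" where
  "condP F A yb x \<eta> = (\<forall>\<eta>1 \<eta>2. \<eta>1 \<ge> 0 \<longrightarrow> \<eta>2 \<ge> 0 \<longrightarrow> \<eta>1 + \<eta>2 < \<eta> \<longrightarrow>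
      graph_deriv_inv_set F yb x (set_scale \<eta>1 (cball 0 1))
        \<inter> set_plus (contingent_cone A x) (set_scale \<eta>2 (cball 0 1))
      \<subseteq> set_plus (contingent_cone (solset F A yb) x) (cball 0 1))"

definition condQ ::
  "('a::real_normed_vector \<Rightarrow> 'b::real_normed_vector set) \<Rightarrow> 'a set \<Rightarrow> 'b \<Rightarrow> 'a \<Rightarrow> real \<Rightarrow> bool" where
  "condQ F A yb x \<tau> = (\<forall>h. edist_set h (contingent_cone (solset F A yb) x)
      \<le> ereal \<tau> * (edist_set 0 (graph_deriv F x yb h) + edist_set h (contingent_cone A x)))"

definition eta_A ::
  "('a::real_normed_vector \<Rightarrow> 'b::real_normed_vector set) \<Rightarrow> 'a set \<Rightarrow> 'a \<Rightarrow> 'b \<Rightarrow> ereal" where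
  "eta_A F A xb yb = (let E = {\<eta>. \<eta> > 0 \<and> (\<exists>\<delta>>0. \<forall>x\<in>solset F A yb \<inter> ball xb \<delta>. condP F A yb x \<eta>)}
      in if E = {} then 0 else Sup (ereal ` E))"

definition tau_A ::
  "('a::real_normed_vector \<Rightarrow> 'b::real_normed_vector set) \<Rightarrow> 'a set \<Rightarrow> 'a \<Rightarrow> 'b \<Rightarrow> ereal" where
  "tau_A F A xb yb = Inf (ereal ` {\<tau>. \<tau> > 0 \<and> (\<exists>\<delta>>0. \<forall>x\<in>solset F A yb \<inter> ball xb \<delta>. condQ F A yb x \<tau>)})"

text \<open>Reciprocal on [0,+\<infinity>] with 1/0 = +\<infinity>, 1/(+\<infinity>) = 0 (this is ereal's inverse).\<close>
lemma "inverse (0::ereal) = \<infinity>" "inverse (\<infinity>::ereal) = 0" by (simp_all add: zero_ereal_def)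

end

theory Submission
  imports Defs
begin

text \<open>
  Condition (Q) at a point x of S is homogeneous in h, and (P) is (Q) tested on the unit ball:
  applying (P) to rescaled tangent directions shows that (P) with \<open>\<eta>\<close> holds at x exactly
  when (Q) with \<open>1 / \<eta>\<close> does, whence \<open>\<eta>\<^sub>A = 1 / \<tau>\<^sub>A\<close>.

  For \<open>subreg\<^sub>A = \<tau>\<^sub>A\<close>: by convexity, short steps from x along directions
  \<open>m (x' - x)\<close>, \<open>m (y' - yb)\<close>, \<open>\<mu> (a - x)\<close> with \<open>y' \<in> F x'\<close>, \<open>a \<in> A\<close> stay in the graph of F
  and in A, so subregularity near x passes to these directions, which are dense in the contingent
  cones. Conversely, given (Q) near xb, Ekeland's variational principle for \<open>dist x\<close> on the
  closed set S yields a point s of S close to xb that almost minimises the distance to x; it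
  satisfies \<open>(1 - 2\<epsilon>) \<parallel>x - s\<parallel> \<le> d(x - s, T(S, s))\<close>, and (Q) at s bounds the right-hand side by
  \<open>\<tau> (d(yb, F x) + d(x, A))\<close>, because \<open>y - yb \<in> DF(s, yb)(x - s)\<close> and \<open>a - s \<in> T(A, s)\<close>.
\<close>

lemma le_infdist: "A \<noteq> {} \<Longrightarrow> (\<And>a. a \<in> A \<Longrightarrow> d \<le> dist x a) \<Longrightarrow> d \<le> infdist x A"
  by (simp add: infdist_notempty cINF_greatest)

lemma edist_set_le_sumI:
  assumes "P \<noteq> {}" "R \<noteq> {}" "0 < \<tau>"
    and bound: "\<And>b c. b \<in> Q \<Longrightarrow> c \<in> R \<Longrightarrow> infdist p P \<le> \<tau> * (dist q b + dist r c)"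
  shows "edist_set p P \<le> ereal \<tau> * (edist_set q Q + edist_set r R)"
proof (cases "Q = {}")
  case True
  then show ?thesis using assms(2,3) by (simp add: edist_set_def)
next
  case False
  have "infdist p P / \<tau> - infdist r R \<le> infdist q Q"
  proof (rule le_infdist[OF False])
    fix b assume "b \<in> Q"
    have "infdist p P / \<tau> - dist q b \<le> infdist r R"
      using assms(2,3) bound[OF \<open>b \<in> Q\<close>] by (intro le_infdist) (auto simp: field_simps)
    then show "infdist p P / \<tau> - infdist r R \<le> dist q b" by linarith
  qed
  then show ?thesis using False assms by (simp add: edist_set_def field_simps)
qed

lemma edist_set_le_sumD:
  assumes "edist_set p P \<le> ereal \<tau> * (edist_set q Q + edist_set r R)"
    and "0 \<le> \<tau>" "P \<noteq> {}" "b \<in> Q" "c \<in> R"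
  shows "infdist p P \<le> \<tau> * (dist q b + dist r c)"
proof -
  have "Q \<noteq> {}" "R \<noteq> {}" using assms(4,5) by auto
  then have "infdist p P \<le> \<tau> * (infdist q Q + infdist r R)"
    using assms(1,3) by (simp add: edist_set_def)
  also have "\<dots> \<le> \<tau> * (dist q b + dist r c)"
    using assms(2,4,5) by (intro mult_left_mono add_mono infdist_le)
  finally show ?thesis .
qed

lemma zero_in_contingent_cone: "a \<in> C \<Longrightarrow> 0 \<in> contingent_cone C a"
  unfolding contingent_cone_def using LIMSEQ_inverse_real_of_nat
  by (intro CollectI exI[of _ "\<lambda>n. 0"] exI[of _ "\<lambda>n. inverse (real (Suc n))"]) auto

lemma contingent_cone_scaleR:
  assumes "v \<in> contingent_cone C a" "0 < l"
  shows "l *\<^sub>R v \<in> contingent_cone C a"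
proof -
  obtain vs ts where "vs \<longlonglongrightarrow> v" "ts \<longlonglongrightarrow> 0" "\<forall>n. 0 < ts n" "\<forall>n. a + ts n *\<^sub>R vs n \<in> C"
    using assms(1) unfolding contingent_cone_def by blast
  with assms(2) show ?thesis unfolding contingent_cone_def
    by (intro CollectI exI[of _ "\<lambda>n. l *\<^sub>R vs n"] exI[of _ "\<lambda>n. ts n / l"])
       (auto intro: tendsto_intros tendsto_divide_zero)
qed

lemma convex_add_scaleR_diff_mem:
  "convex C \<Longrightarrow> p \<in> C \<Longrightarrow> q \<in> C \<Longrightarrow> 0 \<le> s \<Longrightarrow> s \<le> 1 \<Longrightarrow> p + s *\<^sub>R (q - p) \<in> C"
  using convexD_alt[of C p q s] by (simp add: algebra_simps)

lemma convex_scaleR_diff_in_contingent_cone: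
  assumes "convex C" "a \<in> C" "c \<in> C" "0 \<le> l"
  shows "l *\<^sub>R (c - a) \<in> contingent_cone C a"
proof -
  have "\<forall>n. a + inverse (real (Suc n)) *\<^sub>R (c - a) \<in> C"
    using assms(1-3) by (auto intro: convex_add_scaleR_diff_mem simp: inverse_le_1_iff)
  then have "c - a \<in> contingent_cone C a"
    unfolding contingent_cone_def using LIMSEQ_inverse_real_of_nat
    by (intro CollectI exI[of _ "\<lambda>n. c - a"] exI[of _ "\<lambda>n. inverse (real (Suc n))"]) auto
  then show ?thesis
    using assms(2,4) by (cases "l = 0") (auto intro: contingent_cone_scaleR zero_in_contingent_cone)
qed

lemma contingent_cone_approx:
  assumes "v \<in> contingent_cone C a" "0 < e"
  shows "\<exists>c\<in>C. \<exists>m\<ge>0. norm (v - m *\<^sub>R (c - a)) < e"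
proof -
  obtain vs ts where h: "vs \<longlonglongrightarrow> v" "\<forall>n. 0 < ts n" "\<forall>n. a + ts n *\<^sub>R vs n \<in> C"
    using assms(1) unfolding contingent_cone_def by blast
  from h(1) assms(2) obtain n where "dist (vs n) v < e"
    unfolding LIMSEQ_def by blast
  moreover have "vs n = inverse (ts n) *\<^sub>R ((a + ts n *\<^sub>R vs n) - a)"
    using h(2) by (simp add: less_imp_neq[symmetric])
  ultimately show ?thesis
    using h(2,3) by (metis dist_norm norm_minus_commute inverse_nonnegative_iff_nonnegative less_imp_le)
qed

lemma infdist_contingent_cone_le:
  assumes "convex S" "x \<in> S" "0 < t"
  shows "t * infdist h (contingent_cone S x) \<le> infdist (x + t *\<^sub>R h) S"
proof (rule le_infdist)
  show "S \<noteq> {}" using assms(2) by blast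
  fix s assume "s \<in> S"
  then have "inverse t *\<^sub>R (s - x) \<in> contingent_cone S x"
    using assms by (intro convex_scaleR_diff_in_contingent_cone) auto
  then have "t * infdist h (contingent_cone S x) \<le> t * dist h (inverse t *\<^sub>R (s - x))"
    using assms(3) by (intro mult_left_mono infdist_le) auto
  also have "\<dots> = dist (x + t *\<^sub>R h) s"
  proof -
    have "x + t *\<^sub>R h - s = t *\<^sub>R (h - inverse t *\<^sub>R (s - x))"
      using assms(3) by (simp add: algebra_simps)
    then show ?thesis using assms(3) by (simp add: dist_norm)
  qed
  finally show "t * infdist h (contingent_cone S x) \<le> dist (x + t *\<^sub>R h) s" .
qed

lemma convex_solset:
  assumes "convex (gph F)" "convex A"
  shows "convex (solset F A yb)"
proof -
  have "convex {x. yb \<in> F x}"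
  proof (rule convexI)
    fix x y and u v :: real
    assume "x \<in> {x. yb \<in> F x}" "y \<in> {x. yb \<in> F x}" "0 \<le> u" "0 \<le> v" "u + v = 1"
    moreover from this have "u *\<^sub>R (x, yb) + v *\<^sub>R (y, yb) \<in> gph F"
      by (intro convexD[OF assms(1)]) (auto simp: gph_def)
    ultimately show "u *\<^sub>R x + v *\<^sub>R y \<in> {x. yb \<in> F x}"
      by (simp add: gph_def flip: scaleR_add_left)
  qed
  then show ?thesis unfolding solset_def using assms(2) by (rule convex_Int)
qed

lemma closed_solset:
  assumes "closed (gph F)" "closed A"
  shows "closed (solset F A yb)"
proof -
  have "{x. yb \<in> F x} = (\<lambda>x. (x, yb)) -` gph F" by (auto simp: gph_def)
  moreover have "closed ((\<lambda>x. (x, yb)) -` gph F)"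
    using assms(1) by (intro closed_vimage continuous_intros)
  ultimately show ?thesis unfolding solset_def using assms(2) by (simp add: closed_Int)
qed

section \<open>Conditions (P) and (Q)\<close>

lemma set_scale_cball: "0 \<le> r \<Longrightarrow> set_scale r (cball 0 1) = cball (0::'a::real_normed_vector) r"
  by (cases "r = 0") (auto simp: set_scale_def cball_scale intro: image_eqI[of _ _ 0])

lemma mem_set_plus_cball: "u \<in> set_plus P (cball 0 r) \<longleftrightarrow> (\<exists>p\<in>P. norm (u - p) \<le> r)"
  unfolding set_plus_def by (force simp: dist_norm)

lemma mem_graph_deriv_inv_set_cball:
  "u \<in> graph_deriv_inv_set F y x (cball 0 r) \<longleftrightarrow>
    (\<exists>v. norm v \<le> r \<and> (u, v) \<in> contingent_cone (gph F) (x, y))"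
  by (auto simp: graph_deriv_inv_set_def)

lemma condP_iff:
  "condP F A yb x \<eta> \<longleftrightarrow>
    (\<forall>u v w. (u, v) \<in> contingent_cone (gph F) (x, yb) \<longrightarrow> w \<in> contingent_cone A x \<longrightarrow>
      norm v + norm (u - w) < \<eta> \<longrightarrow> (\<exists>s\<in>contingent_cone (solset F A yb) x. norm (u - s) \<le> 1))"
  unfolding condP_def
  by (auto simp: set_scale_cball mem_set_plus_cball mem_graph_deriv_inv_set_cball subset_iff)
     (meson add_mono le_less_trans norm_ge_zero order.refl)+

lemma condQ_imp_condP:
  assumes Q: "condQ F A yb x \<tau>" and "0 < \<tau>" and x: "x \<in> solset F A yb"
  shows "condP F A yb x (1 / \<tau>)"
  unfolding condP_iff
proof (intro allI impI)
  fix u v w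
  assume uv: "(u, v) \<in> contingent_cone (gph F) (x, yb)" and w: "w \<in> contingent_cone A x"
    and small: "norm v + norm (u - w) < 1 / \<tau>"
  let ?TS = "contingent_cone (solset F A yb) x"
  have "infdist u ?TS \<le> \<tau> * (dist 0 v + dist u w)"
    using Q \<open>0 < \<tau>\<close> uv w x unfolding condQ_def
    by (intro edist_set_le_sumD[where Q = "graph_deriv F x yb u"])
       (auto simp: graph_deriv_def dest: zero_in_contingent_cone)
  also have "\<dots> < 1"
    using small \<open>0 < \<tau>\<close> by (simp add: dist_norm field_simps)
  finally obtain s where "s \<in> ?TS" "dist u s < 1"
    using zero_in_contingent_cone[OF x] by (metis empty_iff infdist_notempty cINF_less_iff bdd_below_image_dist)
  then show "\<exists>s\<in>?TS. norm (u - s) \<le> 1" by (force simp: dist_norm)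
qed

lemma condP_imp_condQ:
  assumes P: "condP F A yb x \<eta>" and "0 < \<eta>" and x: "x \<in> solset F A yb"
  shows "condQ F A yb x (1 / \<eta>)"
  unfolding condQ_def
proof
  fix h
  let ?TS = "contingent_cone (solset F A yb) x" and ?TA = "contingent_cone A x"
  have xA: "x \<in> A" using x by (simp add: solset_def)
  have "infdist h ?TS * \<eta> \<le> norm v + norm (h - w)"
    if hv: "(h, v) \<in> contingent_cone (gph F) (x, yb)" and w: "w \<in> ?TA" for v w
  proof (rule ccontr)
    define c where "c = norm v + norm (h - w)"
    define d where "d = infdist h ?TS"
    assume "\<not> d * \<eta> \<le> c"
    then have cd: "c < d * \<eta>" "0 \<le> c" by (auto simp: c_def d_def)
    \<comment> \<open>after rescaling by \<open>l\<close> the data meet the size bound of (P), yet \<open>l h\<close> is farther than 1 from the cone\<close>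
    define l where "l = 2 * \<eta> / (c + d * \<eta>)"
    have l: "0 < l" "l * c < \<eta>" "1 < l * d"
      using cd \<open>0 < \<eta>\<close> by (auto simp: l_def field_simps)
    have "(l *\<^sub>R h, l *\<^sub>R v) \<in> contingent_cone (gph F) (x, yb)"
      using contingent_cone_scaleR[OF hv \<open>0 < l\<close>] by simp
    moreover have "l *\<^sub>R w \<in> ?TA" using contingent_cone_scaleR[OF w \<open>0 < l\<close>] .
    moreover have "norm (l *\<^sub>R v) + norm (l *\<^sub>R h - l *\<^sub>R w) < \<eta>"
      using l by (simp add: c_def distrib_left flip: scaleR_diff_right)
    ultimately obtain s where s: "s \<in> ?TS" "norm (l *\<^sub>R h - s) \<le> 1"
      using P unfolding condP_iff by blast
    have "inverse l *\<^sub>R s \<in> ?TS" using contingent_cone_scaleR[OF s(1)] \<open>0 < l\<close> by simp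
    then have "d \<le> norm (h - inverse l *\<^sub>R s)" unfolding d_def dist_norm[symmetric] by (rule infdist_le)
    moreover have "l *\<^sub>R h - s = l *\<^sub>R (h - inverse l *\<^sub>R s)"
      using \<open>0 < l\<close> by (simp add: algebra_simps)
    ultimately have "l * d \<le> norm (l *\<^sub>R h - s)" using \<open>0 < l\<close> by simp
    with s(2) have "l * d \<le> 1" by simp
    with l show False by simp
  qed
  then show "edist_set h ?TS \<le> ereal (1 / \<eta>) * (edist_set 0 (graph_deriv F x yb h) + edist_set h ?TA)"
    using x xA \<open>0 < \<eta>\<close>
    by (intro edist_set_le_sumI) (auto simp: graph_deriv_def dist_norm field_simps dest: zero_in_contingent_cone)
qed

lemma condP_iff_condQ:
  assumes "x \<in> solset F A yb" "0 < \<eta>"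
  shows "condP F A yb x \<eta> \<longleftrightarrow> condQ F A yb x (1 / \<eta>)"
  using condP_imp_condQ[OF _ assms(2,1)] condQ_imp_condP[of F A yb x "1 / \<eta>"] assms by auto

lemma ereal_inverse_Inf_inverse:
  fixes X :: "ereal set"
  assumes "X \<noteq> {}" and nonneg: "\<And>x. x \<in> X \<Longrightarrow> 0 \<le> x"
  shows "inverse (Inf (inverse ` X)) = Sup X"
proof (rule antisym)
  have "0 \<le> Sup X" using assms by (meson all_not_in_conv Sup_upper order_trans)
  then have "inverse (Sup X) \<le> Inf (inverse ` X)"
    using nonneg by (auto intro!: Inf_greatest ereal_inverse_antimono Sup_upper)
  then have "inverse (Inf (inverse ` X)) \<le> inverse (inverse (Sup X))"
    using \<open>0 \<le> Sup X\<close> by (intro ereal_inverse_antimono) (simp_all add: ereal_inverse_nonneg_iff)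
  also have "\<dots> = Sup X" using \<open>0 \<le> Sup X\<close> by (cases "Sup X") (auto simp: zero_ereal_def)
  finally show "inverse (Inf (inverse ` X)) \<le> Sup X" .
  have "0 \<le> Inf (inverse ` X)"
    using nonneg by (auto intro!: Inf_greatest simp: ereal_inverse_nonneg_iff)
  moreover have "x = inverse (inverse x)" if "x \<in> X" for x
    using nonneg[OF that] by (cases x) (auto simp: zero_ereal_def)
  ultimately show "Sup X \<le> inverse (Inf (inverse ` X))"
    by (metis Sup_least Inf_lower image_eqI ereal_inverse_antimono)
qed

lemma eta_A_eq_inverse_tau_A: "eta_A F A xb yb = inverse (tau_A F A xb yb)"
proof -
  define E where "E = {\<eta>. 0 < \<eta> \<and> (\<exists>\<delta>>0. \<forall>x\<in>solset F A yb \<inter> ball xb \<delta>. condP F A yb x \<eta>)}"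
  have eta: "eta_A F A xb yb = (if E = {} then 0 else Sup (ereal ` E))"
    unfolding eta_A_def E_def Let_def ..
  have T: "{\<tau>. 0 < \<tau> \<and> (\<exists>\<delta>>0. \<forall>x\<in>solset F A yb \<inter> ball xb \<delta>. condQ F A yb x \<tau>)} = (\<lambda>\<eta>. 1 / \<eta>) ` E"
  proof (intro equalityI subsetI)
    fix \<tau> assume "\<tau> \<in> {\<tau>. 0 < \<tau> \<and> (\<exists>\<delta>>0. \<forall>x\<in>solset F A yb \<inter> ball xb \<delta>. condQ F A yb x \<tau>)}"
    then have "1 / \<tau> \<in> E" by (auto simp: E_def condP_iff_condQ)
    then show "\<tau> \<in> (\<lambda>\<eta>. 1 / \<eta>) ` E" by (rule rev_image_eqI) simp
  qed (auto simp: E_def condP_iff_condQ)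
  have "ereal ` (\<lambda>\<eta>. 1 / \<eta>) ` E = inverse ` ereal ` E"
    unfolding image_image by (intro image_cong) (auto simp: E_def divide_inverse)
  then have tau: "tau_A F A xb yb = Inf (inverse ` ereal ` E)"
    unfolding tau_A_def T by simp
  show ?thesis
  proof (cases "E = {}")
    case True
    then show ?thesis by (simp add: eta tau top_ereal_def)
  next
    case False
    have "inverse (Inf (inverse ` ereal ` E)) = Sup (ereal ` E)"
      using False by (intro ereal_inverse_Inf_inverse) (auto simp: E_def)
    with False show ?thesis by (simp add: eta tau)
  qed
qed

section \<open>Subregularity implies (Q)\<close>

lemma subreg_bound_feasible_direction:
  assumes cg: "convex (gph F)" and cA: "convex A" and "0 < \<tau>" "0 < r"
    and x: "x \<in> solset F A yb"
    and subreg: "\<forall>z\<in>ball x r. edist_set z (solset F A yb)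
                   \<le> ereal \<tau> * (edist_set yb (F z) + edist_set z A)"
    and c: "(x', y') \<in> gph F" and a: "a \<in> A" and "0 \<le> m" "0 \<le> \<mu>"
  shows "infdist (m *\<^sub>R (x' - x)) (contingent_cone (solset F A yb) x)
           \<le> \<tau> * (norm (m *\<^sub>R (y' - yb)) + norm (m *\<^sub>R (x' - x) - \<mu> *\<^sub>R (a - x)))"
proof -
  define h where "h = m *\<^sub>R (x' - x)"
  define v where "v = m *\<^sub>R (y' - yb)"
  define w where "w = \<mu> *\<^sub>R (a - x)"
  have xA: "x \<in> A" and xgph: "(x, yb) \<in> gph F" using x by (auto simp: solset_def gph_def)
  have "\<forall>\<^sub>F t in at_right 0. 0 < t \<and> t * m < 1 \<and> t * \<mu> < 1 \<and> t * norm h < r"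
  proof -
    have lim: "((\<lambda>t. t * k) \<longlongrightarrow> 0) (at_right (0::real))" for k :: real
      by (intro tendsto_mult_left_zero tendsto_ident_at)
    show ?thesis
      using \<open>0 < r\<close> eventually_at_right_less[of 0]
      by (intro eventually_conj order_tendstoD(2)[OF lim]) simp_all
  qed
  then obtain t where t: "0 < t" "t * m < 1" "t * \<mu> < 1" "t * norm h < r"
    using eventually_happens[of _ "at_right (0::real)"] by (auto simp: trivial_limit_at_right_real)
  define z where "z = x + t *\<^sub>R h"
  have "dist x z < r" using t by (simp add: z_def dist_norm)
  then have dist_z: "infdist z (solset F A yb) \<le> \<tau> * (dist yb (yb + t *\<^sub>R v) + dist z (x + t *\<^sub>R w))"
  proof (intro edist_set_le_sumD)
    show "edist_set z (solset F A yb) \<le> ereal \<tau> * (edist_set yb (F z) + edist_set z A)"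
      using subreg \<open>dist x z < r\<close> by simp
    have "(x, yb) + (t * m) *\<^sub>R ((x', y') - (x, yb)) \<in> gph F"
      using t \<open>0 \<le> m\<close> by (intro convex_add_scaleR_diff_mem[OF cg xgph c]) auto
    then show "yb + t *\<^sub>R v \<in> F z" by (simp add: gph_def z_def h_def v_def)
    have "x + (t * \<mu>) *\<^sub>R (a - x) \<in> A"
      using t \<open>0 \<le> \<mu>\<close> by (intro convex_add_scaleR_diff_mem[OF cA xA a]) auto
    then show "x + t *\<^sub>R w \<in> A" by (simp add: w_def)
  qed (use \<open>0 < \<tau>\<close> x in auto)
  have "t * infdist h (contingent_cone (solset F A yb) x) \<le> infdist z (solset F A yb)"
    unfolding z_def using convex_solset[OF cg cA] x \<open>0 < t\<close> by (rule infdist_contingent_cone_le)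
  also have "\<dots> \<le> t * (\<tau> * (norm v + norm (h - w)))"
  proof -
    have "dist z (x + t *\<^sub>R w) = t * norm (h - w)"
      using \<open>0 < t\<close> by (simp add: z_def dist_norm flip: scaleR_diff_right)
    with dist_z \<open>0 < t\<close> show ?thesis by (simp add: dist_norm algebra_simps)
  qed
  finally show ?thesis using \<open>0 < t\<close> by (simp add: h_def v_def w_def)
qed

lemma subreg_bound_tangent_direction:
  assumes cg: "convex (gph F)" and cA: "convex A" and "0 < \<tau>" "0 < r"
    and x: "x \<in> solset F A yb"
    and subreg: "\<forall>z\<in>ball x r. edist_set z (solset F A yb)
                   \<le> ereal \<tau> * (edist_set yb (F z) + edist_set z A)"
    and hv: "(h, v) \<in> contingent_cone (gph F) (x, yb)" and w: "w \<in> contingent_cone A x"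
  shows "infdist h (contingent_cone (solset F A yb) x) \<le> \<tau> * (norm v + norm (h - w))"
proof (rule field_le_epsilon)
  let ?TS = "contingent_cone (solset F A yb) x"
  fix e :: real assume "0 < e"
  define e' where "e' = e / (1 + 3 * \<tau>)"
  have "0 < e'" using \<open>0 < e\<close> \<open>0 < \<tau>\<close> by (simp add: e'_def)
  obtain c m where c: "c \<in> gph F" and "0 \<le> m" and hv_approx: "norm ((h, v) - m *\<^sub>R (c - (x, yb))) < e'"
    using contingent_cone_approx[OF hv \<open>0 < e'\<close>] by blast
  obtain x' y' where c_eq: "c = (x', y')" by fastforce
  obtain a \<mu> where a: "a \<in> A" and "0 \<le> \<mu>" and w_approx: "norm (w - \<mu> *\<^sub>R (a - x)) < e'"
    using contingent_cone_approx[OF w \<open>0 < e'\<close>] by blast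
  define h' where "h' = m *\<^sub>R (x' - x)"
  define v' where "v' = m *\<^sub>R (y' - yb)"
  define w' where "w' = \<mu> *\<^sub>R (a - x)"
  have "(h, v) - m *\<^sub>R (c - (x, yb)) = (h - h', v - v')"
    by (simp add: c_eq h'_def v'_def)
  then have hh': "norm (h - h') < e'" and vv': "norm (v - v') < e'"
    using hv_approx norm_fst_le[of "h - h'" "v - v'"] norm_snd_le[of "v - v'" "h - h'"] by auto
  have "infdist h ?TS \<le> infdist h' ?TS + norm (h - h')"
    using infdist_triangle[of h _ h'] by (simp add: dist_norm)
  also have "infdist h' ?TS \<le> \<tau> * (norm v' + norm (h' - w'))"
    unfolding h'_def v'_def w'_def using c a \<open>0 \<le> m\<close> \<open>0 \<le> \<mu>\<close> c_eq
    by (intro subreg_bound_feasible_direction[OF cg cA \<open>0 < \<tau>\<close> \<open>0 < r\<close> x subreg]) auto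
  also have "\<tau> * (norm v' + norm (h' - w')) \<le> \<tau> * ((norm v + e') + (norm (h - w) + 2 * e'))"
  proof -
    have "norm v' \<le> norm v + norm (v - v')"
      using norm_triangle_sub[of v' v] by (simp add: norm_minus_commute)
    moreover have "norm (h - w') \<le> norm (h - w) + norm (w - w')"
      by (rule norm_diff_triangle_le) auto
    then have "norm (h' - w') \<le> norm (h' - h) + (norm (h - w) + norm (w - w'))"
      by (rule norm_diff_triangle_le[OF order_refl])
    ultimately show ?thesis
      using hh' vv' w_approx \<open>0 < \<tau>\<close> by (intro mult_left_mono) (auto simp: w'_def norm_minus_commute)
  qed
  finally have "infdist h ?TS \<le> \<tau> * (norm v + norm (h - w)) + (1 + 3 * \<tau>) * e'"
    using hh' by (simp add: algebra_simps)
  then show "infdist h ?TS \<le> \<tau> * (norm v + norm (h - w)) + e"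
    using \<open>0 < \<tau>\<close> by (simp add: e'_def)
qed

lemma subreg_imp_condQ:
  assumes "convex (gph F)" "convex A" "0 < \<tau>" "0 < r"
    and x: "x \<in> solset F A yb"
    and "\<forall>z\<in>ball x r. edist_set z (solset F A yb)
           \<le> ereal \<tau> * (edist_set yb (F z) + edist_set z A)"
  shows "condQ F A yb x \<tau>"
  unfolding condQ_def
proof
  fix h
  have "x \<in> A" using x by (simp add: solset_def)
  with assms show "edist_set h (contingent_cone (solset F A yb) x)
      \<le> ereal \<tau> * (edist_set 0 (graph_deriv F x yb h) + edist_set h (contingent_cone A x))"
    using subreg_bound_tangent_direction[OF assms]
    by (intro edist_set_le_sumI) (auto simp: graph_deriv_def dist_norm dest: zero_in_contingent_cone)
qed

section \<open>Ekeland's variational principle\<close>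

definition ekeland_set :: "('a::metric_space \<Rightarrow> real) \<Rightarrow> real \<Rightarrow> 'a set \<Rightarrow> 'a \<Rightarrow> 'a set" where
  "ekeland_set f \<alpha> S p = {z \<in> S. f z + \<alpha> * dist z p \<le> f p}"

lemma ekeland_set_refl: "p \<in> S \<Longrightarrow> p \<in> ekeland_set f \<alpha> S p"
  by (simp add: ekeland_set_def)

lemma ekeland_set_subset:
  assumes "0 \<le> \<alpha>" "q \<in> ekeland_set f \<alpha> S p"
  shows "ekeland_set f \<alpha> S q \<subseteq> ekeland_set f \<alpha> S p"
proof
  fix z assume z: "z \<in> ekeland_set f \<alpha> S q"
  have "\<alpha> * dist z p \<le> \<alpha> * dist z q + \<alpha> * dist q p"
    using mult_left_mono[OF dist_triangle[of z p q] \<open>0 \<le> \<alpha>\<close>] by (simp add: distrib_left)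
  with z assms(2) show "z \<in> ekeland_set f \<alpha> S p" by (auto simp: ekeland_set_def)
qed

lemma closed_ekeland_set:
  assumes "closed S" "continuous_on UNIV f"
  shows "closed (ekeland_set f \<alpha> S p)"
proof -
  have "closed {z. f z + \<alpha> * dist z p \<le> f p}"
    using assms(2) by (intro closed_Collect_le continuous_intros) auto
  then show ?thesis using \<open>closed S\<close> by (simp add: ekeland_set_def Collect_conj_eq closed_Int)
qed

lemma ekeland_descent_sequence:
  assumes "s0 \<in> S" and nonneg: "\<And>z. z \<in> S \<Longrightarrow> 0 \<le> f z"
  obtains s where "s 0 = s0" "\<And>n. s n \<in> S" "\<And>n. s (Suc n) \<in> ekeland_set f \<alpha> S (s n)"
    "\<And>n. f (s (Suc n)) \<le> Inf (f ` ekeland_set f \<alpha> S (s n)) + (1/2)^n"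
proof -
  let ?D = "ekeland_set f \<alpha> S"
  have "\<exists>q\<in>?D p. f q \<le> Inf (f ` ?D p) + (1/2)^n" if "p \<in> S" for p n
  proof -
    have "bdd_below (f ` ?D p)"
      using nonneg by (intro bdd_belowI[of _ 0]) (auto simp: ekeland_set_def)
    moreover have "Inf (f ` ?D p) < Inf (f ` ?D p) + (1/2)^n" by simp
    ultimately show ?thesis
      using ekeland_set_refl[OF that] by (subst (asm) cInf_less_iff) (auto intro: less_imp_le)
  qed
  then obtain nxt where nxt: "\<And>p n. p \<in> S \<Longrightarrow> nxt p n \<in> ?D p \<and> f (nxt p n) \<le> Inf (f ` ?D p) + (1/2)^n"
    by metis
  define s where "s n = rec_nat s0 (\<lambda>n p. nxt p n) n" for n
  have s_Suc: "s (Suc n) = nxt (s n) n" for n by (simp add: s_def)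
  have s_in_S: "s n \<in> S" for n
    by (induction n) (use assms(1) nxt in \<open>auto simp: s_def ekeland_set_def\<close>)
  have "s 0 = s0" by (simp add: s_def)
  with s_in_S nxt[OF s_in_S] show thesis by (intro that[of s]) (auto simp: s_Suc)
qed

lemma ekeland_variational_principle:
  fixes f :: "'a::complete_space \<Rightarrow> real"
  assumes "closed S" "s0 \<in> S" "continuous_on UNIV f" and nonneg: "\<And>z. z \<in> S \<Longrightarrow> 0 \<le> f z"
    and "0 < \<alpha>"
  shows "\<exists>s\<in>S. f s \<le> f s0 \<and> (\<forall>z\<in>S. f s \<le> f z + \<alpha> * dist z s)"
proof -
  let ?D = "ekeland_set f \<alpha> S"
  obtain s where s: "s 0 = s0" "\<And>n. s n \<in> S" "\<And>n. s (Suc n) \<in> ?D (s n)"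
    and almost_min: "\<And>n. f (s (Suc n)) \<le> Inf (f ` ?D (s n)) + (1/2)^n"
    using ekeland_descent_sequence[OF assms(2), of f \<alpha>] nonneg by blast
  have D_decr: "?D (s n) \<subseteq> ?D (s m)" if "m \<le> n" for m n
    using lift_Suc_antimono_le[of "\<lambda>n. ?D (s n)", OF ekeland_set_subset[OF _ s(3)] that] \<open>0 < \<alpha>\<close>
    by simp
  have D_small: "\<alpha> * dist z (s (Suc n)) \<le> (1/2)^n" if "z \<in> ?D (s (Suc n))" for z n
  proof -
    have "z \<in> ?D (s n)" using that D_decr[of n "Suc n"] by auto
    then have "Inf (f ` ?D (s n)) \<le> f z"
      using nonneg by (intro cInf_lower bdd_belowI[of _ 0]) (auto simp: ekeland_set_def)
    then show ?thesis using that almost_min[of n] by (simp add: ekeland_set_def)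
  qed
  have "\<exists>l. (\<Inter>n. ?D (s n)) = {l}"
  proof (rule decreasing_closed_nest_sing)
    show "closed (?D (s n))" "?D (s n) \<noteq> {}" for n
      using closed_ekeland_set[OF assms(1,3)] ekeland_set_refl[OF s(2), where f = f and \<alpha> = \<alpha>] by auto
    show "?D (s n) \<subseteq> ?D (s m)" if "m \<le> n" for m n using D_decr[OF that] .
    show "\<exists>n. \<forall>x\<in>?D (s n). \<forall>y\<in>?D (s n). dist x y < e" if "0 < e" for e
    proof -
      obtain N where N: "(1/2::real)^N < \<alpha> * e / 2"
        using real_arch_pow_inv[of "\<alpha> * e / 2" "1/2"] \<open>0 < e\<close> \<open>0 < \<alpha>\<close> by auto
      have "dist x y < e" if "x \<in> ?D (s (Suc N))" "y \<in> ?D (s (Suc N))" for x y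
      proof -
        have "\<alpha> * dist x y \<le> \<alpha> * dist x (s (Suc N)) + \<alpha> * dist y (s (Suc N))"
          using dist_triangle2[of x y "s (Suc N)"] \<open>0 < \<alpha>\<close> by (simp flip: distrib_left)
        also have "\<dots> < \<alpha> * e" using D_small[OF that(1)] D_small[OF that(2)] N by linarith
        finally show ?thesis using \<open>0 < \<alpha>\<close> by simp
      qed
      then show ?thesis by blast
    qed
  qed
  then obtain l where l: "(\<Inter>n. ?D (s n)) = {l}" by blast
  then have l_in_D: "l \<in> ?D (s n)" for n by blast
  have "l \<in> S" "f l \<le> f s0"
    using l_in_D[of 0] \<open>0 < \<alpha>\<close> s(1) by (auto simp: ekeland_set_def intro: order_trans[rotated])
  moreover have "f l \<le> f z + \<alpha> * dist z l" if "z \<in> S" for z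
  proof (rule ccontr)
    assume "\<not> ?thesis"
    then have "z \<in> ?D l" using that by (simp add: ekeland_set_def)
    then have "z \<in> (\<Inter>n. ?D (s n))" using ekeland_set_subset[OF _ l_in_D] \<open>0 < \<alpha>\<close> by auto
    with l \<open>\<not> ?thesis\<close> show False by simp
  qed
  ultimately show ?thesis by blast
qed

section \<open>(Q) implies subregularity\<close>

lemma ekeland_point_tangent_bound:
  assumes w: "w \<in> contingent_cone S s" and "0 \<le> \<epsilon>"
    and min: "\<forall>z\<in>S. dist x s \<le> dist x z + \<epsilon> * dist z s"
  shows "norm (x - s) \<le> norm (x - s - w) + \<epsilon> * norm w"
proof -
  obtain vs ts where vs: "vs \<longlonglongrightarrow> w" and ts: "ts \<longlonglongrightarrow> 0" "\<forall>n. 0 < ts n"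
    and in_S: "\<forall>n. s + ts n *\<^sub>R vs n \<in> S"
    using w unfolding contingent_cone_def by blast
  have "norm (x - s) \<le> norm (x - s - vs n) + \<epsilon> * norm (vs n)" if "ts n \<le> 1" for n
  proof -
    define t where "t = ts n"
    have "0 < t" "t \<le> 1" using ts(2) that by (auto simp: t_def)
    have "dist x s \<le> dist x (s + t *\<^sub>R vs n) + \<epsilon> * dist (s + t *\<^sub>R vs n) s"
      using min in_S by (simp add: t_def)
    moreover have "dist x (s + t *\<^sub>R vs n) = norm (x - s - t *\<^sub>R vs n)"
      by (simp add: dist_norm diff_diff_eq)
    moreover have "dist (s + t *\<^sub>R vs n) s = t * norm (vs n)"
      using \<open>0 < t\<close> by (simp add: dist_norm)
    ultimately have "norm (x - s) \<le> norm (x - s - t *\<^sub>R vs n) + \<epsilon> * (t * norm (vs n))"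
      by (metis dist_norm)
    also have "x - s - t *\<^sub>R vs n = (1 - t) *\<^sub>R (x - s) + t *\<^sub>R (x - s - vs n)"
      by (simp add: algebra_simps)
    also have "norm \<dots> \<le> (1 - t) * norm (x - s) + t * norm (x - s - vs n)"
      using norm_triangle_ineq[of "(1 - t) *\<^sub>R (x - s)" "t *\<^sub>R (x - s - vs n)"] \<open>0 < t\<close> \<open>t \<le> 1\<close>
      by simp
    finally have "t * norm (x - s) \<le> t * (norm (x - s - vs n) + \<epsilon> * norm (vs n))"
      by (simp add: algebra_simps)
    then show ?thesis using \<open>0 < t\<close> by simp
  qed
  moreover have "\<forall>\<^sub>F n in sequentially. ts n \<le> 1"
    using order_tendstoD(2)[OF ts(1), of 1] by (auto elim: eventually_mono)
  ultimately have "\<forall>\<^sub>F n in sequentially. norm (x - s) \<le> norm (x - s - vs n) + \<epsilon> * norm (vs n)"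
    by (auto elim: eventually_mono)
  moreover have "(\<lambda>n. norm (x - s - vs n) + \<epsilon> * norm (vs n)) \<longlonglongrightarrow> norm (x - s - w) + \<epsilon> * norm w"
    using vs by (intro tendsto_intros)
  ultimately show ?thesis by (intro tendsto_lowerbound) auto
qed

lemma ekeland_point_infdist_bound:
  assumes "s \<in> S" "0 \<le> \<epsilon>" and min: "\<forall>z\<in>S. dist x s \<le> dist x z + \<epsilon> * dist z s"
  shows "(1 - 2 * \<epsilon>) * norm (x - s) \<le> infdist (x - s) (contingent_cone S s)"
proof (rule le_infdist)
  show "contingent_cone S s \<noteq> {}" using zero_in_contingent_cone[OF \<open>s \<in> S\<close>] by blast
  fix w assume w: "w \<in> contingent_cone S s"
  show "(1 - 2 * \<epsilon>) * norm (x - s) \<le> dist (x - s) w"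
  proof (cases "norm w \<le> 2 * norm (x - s)")
    case True
    then have "\<epsilon> * norm w \<le> 2 * \<epsilon> * norm (x - s)" using mult_left_mono[OF True \<open>0 \<le> \<epsilon>\<close>] by simp
    then show ?thesis
      using ekeland_point_tangent_bound[OF w \<open>0 \<le> \<epsilon>\<close> min] by (simp add: dist_norm algebra_simps)
  next
    case False
    then have "norm (x - s) \<le> dist (x - s) w"
      using norm_triangle_sub[of w "x - s"] by (simp add: dist_norm norm_minus_commute)
    moreover have "(1 - 2 * \<epsilon>) * norm (x - s) \<le> norm (x - s)"
      using \<open>0 \<le> \<epsilon>\<close> by (simp add: algebra_simps)
    ultimately show ?thesis by linarith
  qed
qed

lemma condQ_imp_subreg:
  fixes F :: "'a::banach \<Rightarrow> 'b::real_normed_vector set"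
  assumes "closed (gph F)" "convex (gph F)" "closed A" "convex A"
    and "0 < \<tau>" "0 < \<epsilon>" "\<epsilon> < 1/2" and xb: "xb \<in> solset F A yb"
    and Q: "\<forall>s\<in>solset F A yb \<inter> ball xb \<delta>. condQ F A yb s \<tau>"
    and x: "x \<in> ball xb (\<delta>/2)"
  shows "edist_set x (solset F A yb) \<le> ereal (\<tau> / (1 - 2 * \<epsilon>)) * (edist_set yb (F x) + edist_set x A)"
proof -
  let ?S = "solset F A yb"
  have "\<exists>s\<in>?S. dist x s \<le> dist x xb \<and> (\<forall>z\<in>?S. dist x s \<le> dist x z + \<epsilon> * dist z s)"
    using closed_solset[OF assms(1,3)] xb \<open>0 < \<epsilon>\<close>
    by (intro ekeland_variational_principle) (auto intro: continuous_intros)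
  then obtain s where s: "s \<in> ?S" "dist x s \<le> dist x xb"
    and min: "\<forall>z\<in>?S. dist x s \<le> dist x z + \<epsilon> * dist z s"
    by blast
  have "dist xb s < \<delta>"
    using dist_triangle[of xb s x] s(2) x by (simp add: dist_commute)
  then have Qs: "condQ F A yb s \<tau>" using Q s(1) by simp
  have sA: "s \<in> A" and s_gph: "(s, yb) \<in> gph F" using s(1) by (auto simp: solset_def gph_def)
  have lower: "(1 - 2 * \<epsilon>) * norm (x - s) \<le> infdist (x - s) (contingent_cone ?S s)"
    using ekeland_point_infdist_bound[OF s(1) _ min] \<open>0 < \<epsilon>\<close> by simp
  show ?thesis
  proof (rule edist_set_le_sumI)
    show "?S \<noteq> {}" "A \<noteq> {}" using xb by (auto simp: solset_def)
    show "0 < \<tau> / (1 - 2 * \<epsilon>)" using assms(5,7) by simp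
    fix y a assume y: "y \<in> F x" and a: "a \<in> A"
    have "y - yb \<in> graph_deriv F s yb (x - s)"
      using convex_scaleR_diff_in_contingent_cone[OF assms(2) s_gph, of "(x, y)" 1] y
      by (simp add: graph_deriv_def gph_def)
    moreover have "a - s \<in> contingent_cone A s"
      using convex_scaleR_diff_in_contingent_cone[OF assms(4) sA a, of 1] by simp
    ultimately have "infdist (x - s) (contingent_cone ?S s) \<le> \<tau> * (dist 0 (y - yb) + dist (x - s) (a - s))"
      using Qs \<open>0 < \<tau>\<close> zero_in_contingent_cone[OF s(1)] unfolding condQ_def
      by (intro edist_set_le_sumD) auto
    with lower have "(1 - 2 * \<epsilon>) * dist x s \<le> \<tau> * (dist yb y + dist x a)"
      by (simp add: dist_norm norm_minus_commute)
    then have "dist x s \<le> \<tau> / (1 - 2 * \<epsilon>) * (dist yb y + dist x a)"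
      using \<open>\<epsilon> < 1/2\<close> by (simp add: field_simps)
    then show "infdist x ?S \<le> \<tau> / (1 - 2 * \<epsilon>) * (dist yb y + dist x a)"
      using infdist_le[OF s(1), of x] by linarith
  qed
qed

section \<open>Equality of the moduli\<close>

lemma Inf_ereal_eq_if_dense_above:
  fixes A B :: "real set"
  assumes "A \<subseteq> B" and dense: "\<And>b c. b \<in> B \<Longrightarrow> b < c \<Longrightarrow> c \<in> A"
  shows "Inf (ereal ` A) = Inf (ereal ` B)"
proof (rule antisym)
  show "Inf (ereal ` B) \<le> Inf (ereal ` A)" using assms(1) by (intro Inf_superset_mono) auto
  show "Inf (ereal ` A) \<le> Inf (ereal ` B)"
  proof (rule Inf_greatest, elim imageE)
    fix y b assume "b \<in> B" "y = ereal b"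
    have "Inf (ereal ` A) \<le> ereal b + ereal e" if "0 < e" for e
      using dense[OF \<open>b \<in> B\<close>, of "b + e"] that by (auto intro: Inf_lower)
    then show "Inf (ereal ` A) \<le> y" unfolding \<open>y = ereal b\<close> by (rule ereal_le_epsilon2)
  qed
qed

lemma subreg_eq_tau_A:
  fixes F :: "'a::banach \<Rightarrow> 'b::real_normed_vector set"
  assumes "closed (gph F)" "convex (gph F)" "closed A" "convex A" "xb \<in> solset F A yb"
  shows "subreg F A xb yb = tau_A F A xb yb"
proof -
  define SR where "SR = {\<tau>. 0 < \<tau> \<and> (\<exists>\<delta>>0. \<forall>x\<in>ball xb \<delta>.
      edist_set x (solset F A yb) \<le> ereal \<tau> * (edist_set yb (F x) + edist_set x A))}"
  define TQ where "TQ = {\<tau>. 0 < \<tau> \<and> (\<exists>\<delta>>0. \<forall>x\<in>solset F A yb \<inter> ball xb \<delta>. condQ F A yb x \<tau>)}"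
  have "SR \<subseteq> TQ"
  proof
    fix \<tau> assume "\<tau> \<in> SR"
    then obtain \<delta> where "0 < \<tau>" "0 < \<delta>" and subreg: "\<forall>x\<in>ball xb \<delta>.
        edist_set x (solset F A yb) \<le> ereal \<tau> * (edist_set yb (F x) + edist_set x A)"
      by (auto simp: SR_def)
    have "condQ F A yb x \<tau>" if x: "x \<in> solset F A yb \<inter> ball xb \<delta>" for x
    proof -
      obtain r where "0 < r" "ball x r \<subseteq> ball xb \<delta>" using x openE[OF open_ball] by blast
      then show ?thesis
        using subreg x by (intro subreg_imp_condQ[OF assms(2,4) \<open>0 < \<tau>\<close> \<open>0 < r\<close>]) auto
    qed
    then show "\<tau> \<in> TQ" using \<open>0 < \<tau>\<close> \<open>0 < \<delta>\<close> by (auto simp: TQ_def)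
  qed
  moreover have "c \<in> SR" if "b \<in> TQ" "b < c" for b c
  proof -
    obtain \<delta> where "0 < b" "0 < \<delta>" and Q: "\<forall>x\<in>solset F A yb \<inter> ball xb \<delta>. condQ F A yb x b"
      using \<open>b \<in> TQ\<close> by (auto simp: TQ_def)
    define \<epsilon> where "\<epsilon> = (1 - b / c) / 2"
    have "0 < \<epsilon>" "\<epsilon> < 1/2" "b / (1 - 2 * \<epsilon>) = c"
      using \<open>0 < b\<close> \<open>b < c\<close> by (auto simp: \<epsilon>_def field_simps)
    then have "\<forall>x\<in>ball xb (\<delta> / 2).
        edist_set x (solset F A yb) \<le> ereal c * (edist_set yb (F x) + edist_set x A)"
      using condQ_imp_subreg[OF assms(1-4) \<open>0 < b\<close> _ _ assms(5) Q] by metis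
    then show "c \<in> SR" using \<open>0 < b\<close> \<open>b < c\<close> \<open>0 < \<delta>\<close> unfolding SR_def
      by (intro CollectI conjI exI[of _ "\<delta> / 2"]) auto
  qed
  ultimately have "Inf (ereal ` SR) = Inf (ereal ` TQ)" by (rule Inf_ereal_eq_if_dense_above)
  then show ?thesis by (simp add: subreg_def tau_A_def SR_def TQ_def)
qed

theorem theorem3p1:
  fixes F :: "'a::banach \<Rightarrow> 'b::banach set" and A :: "'a set" and xb :: 'a and yb :: 'b
  assumes "closed (gph F)" and "convex (gph F)"
    and "closed A" and "convex A"
    and "xb \<in> solset F A yb"
  shows "inverse (subreg F A xb yb) = eta_A F A xb yb \<and> eta_A F A xb yb = inverse (tau_A F A xb yb)"
  using subreg_eq_tau_A[OF assms] eta_A_eq_inverse_tau_A[of F A xb yb] by simp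

end
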